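(* Run the mechanism BFM-VM described in the context with $\ell=2$ and arbitrary $B>0$, $\alpha>1$, with all sellers behaving truthfully, and let $O$ be an optimal solution of $\max\{v(S): S\subseteq\mathcal{N},\ c(S)\le B\}$. Then $$v(O)\ \le\ 2\rho_M+2\sum_{i=1}^{2}\sum_{t=1}^{M}v(S_{i,t}).$$
   Context: Setting. $\mathcal{N}$ is a finite set of $n$ sellers. The valuation $v:2^{\mathcal{N}}\to\mathbb{R}_{\ge 0}$ satisfies $v(\emptyset)=0$ and is submodular (for $X\subseteq Y\subseteq\mathcal{N}$ and $u\notin Y$, $v(u\mid Y)\le v(u\mid X)$), not necessarily monotone, where $v(S\mid T)=v(S\cup T)-v(T)$, $v(u\mid T)=v(\{u\}\mid T)$, $v(u)=v(\{u\})$. Each seller $u$ has a private cost $c(u)\ge 0$; $c(X)=\sum_{u\in X}c(u)$. $B>0$ is the budget, $[\ell]=\{1,\dots,\ell\}$. Sellers behave truthfully: a seller $u$ offered price $q$ accepts iff $c(u)\le q$. Mechanism BFM-VM (inputs $B$, $\alpha>1$, $\ell\in\{1,2\}$): 1. Offer every seller the price $B$; let $R$ be the set of sellers who accept, and set $p(u)=B$ for $u\in R$. 2. Set $t=1$, $\rho_1=\max_{u\in R}v(u)$, $S_{1,1}=\{u_0\}$ for some $u_0\in\arg\max_{u\in R}v(u)$, and (if $\ell=2$) $S_{2,1}=\emptyset$. 3. Repeat rounds: set $t\leftarrow t+1$, $\rho_t=\alpha\rho_{t-1}$, $S_{i,t}=\emptyset$ for $i\in[\ell]$. Process the sellers $u\in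 R\setminus\bigcup_{i=1}^{\ell}S_{i,t-1}$ one at a time in a fixed order. For each such $u$: pick $j\in\arg\max_{i\in[\ell]}v(u\mid S_{i,t})$ (current contents); update $p(u)\leftarrow\min\{p(u),\ v(u\mid S_{j,t})/(\rho_t/B)\}$ and offer $p(u)$ to $u$. If $u$ accepts: if $v(S_{j,t}\cup\{u\})>\rho_t$, end the round immediately; otherwise add $u$ to $S_{j,t}$. If $u$ rejects, remove $u$ from $R$. After the round, stop if $R\setminus\bigcup_{i=1}^{\ell}(S_{i,t-1}\cup S_{i,t})=\emptyset$; otherwise start another round. 4. Let $M$ be the final value of $t$. Output $S^*\in\arg\max_{A\in\{S_{i,t}: i\in[\ell],\ t\in\{M-1,M\}\}}v(A)$, paying each $u\in S^*$ its current price $p(u)$. Notation: $S_{i,t}$ denotes the contents of that candidate set at the end of round $t$; $\rho_M$ is the threshold of the last round. *)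

theory Defs
  imports Main "HOL-Library.FuncSet" Complex_Main
begin

definition marg :: "('a set \<Rightarrow> real) \<Rightarrow> 'a \<Rightarrow> 'a set \<Rightarrow> real" where
  "marg v u T = v (T \<union> {u}) - v T"

definition submodular_on :: "'a set \<Rightarrow> ('a set \<Rightarrow> real) \<Rightarrow> bool" where
  "submodular_on N v \<longleftrightarrow>
     (\<forall>X Y u. X \<subseteq> Y \<longrightarrow> Y \<subseteq> N \<longrightarrow> u \<in> N \<longrightarrow> u \<notin> Y \<longrightarrow> marg v u Y \<le> marg v u X)"

text \<open>State inside a round: current set R, current prices p, and the candidate sets
  (indexed by i \<in> {1,2}) of the current round.\<close>
type_synonym 'a bfm_state = "'a set \<times> ('a \<Rightarrow> real) \<times> (nat \<Rightarrow> 'a set)"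

text \<open>Processing of one round of BFM-VM (with \<ell> = 2) with threshold \<rho>:
  \<open>bfm_round v c B \<rho> queue st st'\<close> means that processing the sellers of \<open>queue\<close>
  in order, starting in state st, can end in state st' (nondeterminism only in
  the tie-breaking choice of j). Sellers are truthful: accept iff c u \<le> price.\<close>
inductive bfm_round :: "('a set \<Rightarrow> real) \<Rightarrow> ('a \<Rightarrow> real) \<Rightarrow> real \<Rightarrow> real
    \<Rightarrow> 'a list \<Rightarrow> 'a bfm_state \<Rightarrow> 'a bfm_state \<Rightarrow> bool"
  for v c B \<rho> where
  finish: "bfm_round v c B \<rho> [] st st"
| reject: "\<lbrakk> j \<in> {1,2}; \<forall>i\<in>{1,2}. marg v u (S i) \<le> marg v u (S j);
            q = min (p u) (marg v u (S j) / (\<rho> / B));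
            \<not> c u \<le> q;
            bfm_round v c B \<rho> us (R - {u}, p(u := q), S) st' \<rbrakk>
          \<Longrightarrow> bfm_round v c B \<rho> (u # us) (R, p, S) st'"
| add: "\<lbrakk> j \<in> {1,2}; \<forall>i\<in>{1,2}. marg v u (S i) \<le> marg v u (S j);
          q = min (p u) (marg v u (S j) / (\<rho> / B));
          c u \<le> q; \<not> v (S j \<union> {u}) > \<rho>;
          bfm_round v c B \<rho> us (R, p(u := q), S(j := S j \<union> {u})) st' \<rbrakk>
        \<Longrightarrow> bfm_round v c B \<rho> (u # us) (R, p, S) st'"
| stop: "\<lbrakk> j \<in> {1,2}; \<forall>i\<in>{1,2}. marg v u (S i) \<le> marg v u (S j);
           q = min (p u) (marg v u (S j) / (\<rho> / B));
           c u \<le> q; v (S j \<union> {u}) > \<rho> \<rbrakk>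
         \<Longrightarrow> bfm_round v c B \<rho> (u # us) (R, p, S) (R, p(u := q), S)"

text \<open>A complete execution of BFM-VM with \<ell> = 2. The sellers are N, processed in the
  fixed order given by the list ord. The trace records, for every round t \<in> {1..M}:
  the threshold \<rho> t, the candidate sets S i t (i \<in> {1,2}, contents at the end of round t),
  the set R after round t (Rs t) and the prices after round t (ps t).\<close>
definition bfm_vm_run ::
  "'a set \<Rightarrow> 'a list \<Rightarrow> ('a set \<Rightarrow> real) \<Rightarrow> ('a \<Rightarrow> real) \<Rightarrow> real \<Rightarrow> real
   \<Rightarrow> nat \<Rightarrow> (nat \<Rightarrow> real) \<Rightarrow> (nat \<Rightarrow> nat \<Rightarrow> 'a set) \<Rightarrow> (nat \<Rightarrow> 'a set) \<Rightarrow> (nat \<Rightarrow> 'a \<Rightarrow> real) \<Rightarrow> bool"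
  where
  "bfm_vm_run N ord v c B \<alpha> M \<rho> S Rs ps \<longleftrightarrow>
     \<comment> \<open>Step 1: every seller is offered B; R = accepting sellers, p(u) = B\<close>
     Rs 1 = {u \<in> N. c u \<le> B} \<and> ps 1 = (\<lambda>u. B) \<and>
     \<comment> \<open>Step 2\<close>
     (\<exists>u0 \<in> Rs 1. (\<forall>u \<in> Rs 1. v {u} \<le> v {u0}) \<and>
        \<rho> 1 = v {u0} \<and> S 1 1 = {u0} \<and> S 2 1 = {}) \<and>
     (\<forall>i. i \<notin> {1,2} \<longrightarrow> S i 1 = {}) \<and>
     \<comment> \<open>Step 3: rounds t = 2..M\<close>
     2 \<le> M \<and>
     (\<forall>t \<in> {2..M}.
        \<rho> t = \<alpha> * \<rho> (t - 1) \<and>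
        bfm_round v c B (\<rho> t)
          (filter (\<lambda>u. u \<in> Rs (t - 1) \<and> u \<notin> S 1 (t - 1) \<union> S 2 (t - 1)) ord)
          (Rs (t - 1), ps (t - 1), (\<lambda>i. {}))
          (Rs t, ps t, (\<lambda>i. S i t))) \<and>
     \<comment> \<open>stopping rule: continue after rounds 2..M-1, stop after round M\<close>
     (\<forall>t \<in> {2..<M}. Rs t - (\<Union>i\<in>{1,2}. S i (t - 1) \<union> S i t) \<noteq> {}) \<and>
     Rs M - (\<Union>i\<in>{1,2}. S i (M - 1) \<union> S i M) = {}"

end

theory Submission
  imports Defs
begin

text \<open>
  Every seller of a budget-feasible set \<open>X\<close> accepts the first offer \<open>B\<close>, so it is either
  rejected in some round or, by the stopping rule, lies in a candidate set of one of the last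
  two rounds. By subadditivity it suffices to bound the part \<open>D\<^sub>t\<close> of \<open>X\<close> belonging
  to round \<open>t\<close>, and submodularity together with the disjointness of the two candidate sets gives
  \<open>v(D\<^sub>t) \<le> v(D\<^sub>t \<union> S\<^sub>1\<^sub>t) + v(D\<^sub>t \<union> S\<^sub>2\<^sub>t)\<close>. Adding \<open>D\<^sub>t\<close> to \<open>S\<^sub>i\<^sub>t\<close> costs at most the sum of
  the marginal gains with respect to \<open>S\<^sub>i\<^sub>t\<close>. For the members of the other candidate set these
  sum to at most its value, because each of them was placed where its gain was largest; a
  rejected seller \<open>u\<close> refused its price, so its gain is below \<open>c(u) \<rho>\<^sub>t / B \<le> c(u) \<rho>\<^sub>M / B\<close>.
  Since every seller is rejected at most once, the rejected members of \<open>X\<close> cost at most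
  \<open>c(X) \<le> B\<close> in total, which yields the term \<open>2 \<rho>\<^sub>M\<close>.
\<close>

section \<open>Submodular set functions\<close>

lemma submodular_onD:
  "submodular_on N v \<Longrightarrow> X \<subseteq> Y \<Longrightarrow> Y \<subseteq> N \<Longrightarrow> u \<in> N \<Longrightarrow> u \<notin> Y
   \<Longrightarrow> marg v u Y \<le> marg v u X"
  unfolding submodular_on_def by blast

lemma marg_insert: "v (insert u Y) = v Y + marg v u Y"
  by (simp add: marg_def)

lemma submodular_on_union_le_sum_marg:
  assumes sub: "submodular_on N v" and "Y \<subseteq> N" and "finite A" and "A \<subseteq> N"
  shows "v (A \<union> Y) \<le> v Y + (\<Sum>u\<in>A - Y. marg v u Y)"
  using \<open>finite A\<close> \<open>A \<subseteq> N\<close>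
proof (induction A rule: finite_induct)
  case (insert a A)
  show ?case
  proof (cases "a \<in> Y")
    case True
    then show ?thesis using insert by (simp add: insert_absorb)
  next
    case False
    have "marg v a (A \<union> Y) \<le> marg v a Y"
      by (rule submodular_onD[OF sub]) (use insert \<open>Y \<subseteq> N\<close> False in auto)
    moreover have "insert a A - Y = insert a (A - Y)" "a \<notin> A - Y"
      using False insert.hyps(2) by auto
    ultimately show ?thesis
      using insert marg_insert[of v a "A \<union> Y"] by (simp add: sum.insert_remove)
  qed
qed simp

lemma submodular_on_gain_antimono:
  assumes sub: "submodular_on N v" and "Z \<subseteq> Y" and "Y \<subseteq> N"
    and "finite A" and "A \<subseteq> N" and "A \<inter> Y = {}"
  shows "v (A \<union> Y) - v Y \<le> v (A \<union> Z) - v Z"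
  using \<open>finite A\<close> \<open>A \<subseteq> N\<close> \<open>A \<inter> Y = {}\<close>
proof (induction A rule: finite_induct)
  case (insert a A)
  have "marg v a (A \<union> Y) \<le> marg v a (A \<union> Z)"
    by (rule submodular_onD[OF sub]) (use insert assms(2,3) in auto)
  then show ?case
    using insert marg_insert[of v a "A \<union> Y"] marg_insert[of v a "A \<union> Z"] by simp
qed simp

lemma submodular_on_union_inter:
  assumes sub: "submodular_on N v" and "X \<subseteq> N" and "Y \<subseteq> N" and "finite X"
  shows "v (X \<union> Y) + v (X \<inter> Y) \<le> v X + v Y"
proof -
  have "v ((X - Y) \<union> Y) - v Y \<le> v ((X - Y) \<union> (X \<inter> Y)) - v (X \<inter> Y)"
    by (rule submodular_on_gain_antimono[OF sub]) (use assms in auto)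
  moreover have "(X - Y) \<union> Y = X \<union> Y" "(X - Y) \<union> (X \<inter> Y) = X"
    by auto
  ultimately show ?thesis
    by simp
qed

lemma submodular_on_subadditive:
  assumes "submodular_on N v" and nonneg: "\<And>Y. Y \<subseteq> N \<Longrightarrow> 0 \<le> v Y"
    and "X \<subseteq> N" and "Y \<subseteq> N" and "finite X"
  shows "v (X \<union> Y) \<le> v X + v Y"
proof -
  have "0 \<le> v (X \<inter> Y)"
    using nonneg \<open>X \<subseteq> N\<close> by blast
  then show ?thesis
    using submodular_on_union_inter[OF assms(1,3-5)] by linarith
qed

lemma submodular_on_subadditive_UN:
  assumes sub: "submodular_on N v" and nonneg: "\<And>Y. Y \<subseteq> N \<Longrightarrow> 0 \<le> v Y" and "v {} = 0"
    and "finite I" and "\<And>i. i \<in> I \<Longrightarrow> A i \<subseteq> N" and "\<And>i. i \<in> I \<Longrightarrow> finite (A i)"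
  shows "v (\<Union>i\<in>I. A i) \<le> (\<Sum>i\<in>I. v (A i))"
  using \<open>finite I\<close> assms(5,6)
proof (induction I rule: finite_induct)
  case (insert i I)
  have "v (A i \<union> (\<Union>j\<in>I. A j)) \<le> v (A i) + v (\<Union>j\<in>I. A j)"
    by (rule submodular_on_subadditive[OF sub nonneg]) (use insert.prems in auto)
  then show ?case
    using insert by simp
qed (simp add: \<open>v {} = 0\<close>)

lemma submodular_on_le_sum_union_disjoint:
  assumes "submodular_on N v" and nonneg: "\<And>Y. Y \<subseteq> N \<Longrightarrow> 0 \<le> v Y"
    and "D \<subseteq> N" and "finite D" and "Y1 \<subseteq> N" and "finite Y1" and "Y2 \<subseteq> N" and "Y1 \<inter> Y2 = {}"
  shows "v D \<le> v (D \<union> Y1) + v (D \<union> Y2)"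
proof -
  have "v ((D \<union> Y1) \<union> (D \<union> Y2)) + v ((D \<union> Y1) \<inter> (D \<union> Y2)) \<le> v (D \<union> Y1) + v (D \<union> Y2)"
    by (rule submodular_on_union_inter[OF assms(1)]) (use assms in auto)
  moreover have "(D \<union> Y1) \<inter> (D \<union> Y2) = D"
    using \<open>Y1 \<inter> Y2 = {}\<close> by auto
  moreover have "0 \<le> v ((D \<union> Y1) \<union> (D \<union> Y2))"
    using nonneg assms(3,5,7) by simp
  ultimately show ?thesis
    by simp
qed

section \<open>A single round\<close>

definition round_invariant :: "'a set \<Rightarrow> 'a list \<Rightarrow> (nat \<Rightarrow> 'a set) \<Rightarrow> bool" where
  "round_invariant N us S \<longleftrightarrow>
     distinct us \<and> set us \<subseteq> N \<and> S 1 \<subseteq> N \<and> S 2 \<subseteq> N \<and>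
     S 1 \<inter> S 2 = {} \<and> set us \<inter> (S 1 \<union> S 2) = {}"

lemma round_invariant_empty: "round_invariant N us (\<lambda>i. {}) \<longleftrightarrow> distinct us \<and> set us \<subseteq> N"
  by (simp add: round_invariant_def)

lemma round_invariant_ConsD: "round_invariant N (u # us) S \<Longrightarrow> round_invariant N us S"
  by (auto simp: round_invariant_def)

lemma round_invariant_Cons_add:
  "round_invariant N (u # us) S \<Longrightarrow> j \<in> {1, 2} \<Longrightarrow> round_invariant N us (S(j := S j \<union> {u}))"
  by (auto simp: round_invariant_def)

lemma bfm_round_invariant:
  "bfm_round v c B \<rho> us (R, p, S) (R', p', S') \<Longrightarrow> round_invariant N us S \<Longrightarrow> round_invariant N [] S'"
proof (induction us "(R, p, S)" "(R', p', S')" arbitrary: R p S rule: bfm_round.induct)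
  case (add j u S q p us R)
  then show ?case by (blast intro: round_invariant_Cons_add)
qed (auto simp: round_invariant_def)

lemma bfm_round_candidates:
  "bfm_round v c B \<rho> us (R, p, S) (R', p', S') \<Longrightarrow> S i \<subseteq> S' i \<and> S' i \<subseteq> S i \<union> set us"
proof (induction us "(R, p, S)" "(R', p', S')" arbitrary: R p S rule: bfm_round.induct)
  case (add j u S q p us R)
  then show ?case by (auto split: if_splits)
qed auto

lemma bfm_round_remaining:
  "bfm_round v c B \<rho> us (R, p, S) (R', p', S') \<Longrightarrow> R' \<subseteq> R \<and> R - R' \<subseteq> set us"
  by (induction us "(R, p, S)" "(R', p', S')" arbitrary: R p S rule: bfm_round.induct) auto

lemma bfm_round_prices:
  "bfm_round v c B \<rho> us (R, p, S) (R', p', S') \<Longrightarrow> \<forall>u\<in>R. c u \<le> p u \<Longrightarrow> \<forall>u\<in>R'. c u \<le> p' u"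
  by (induction us "(R, p, S)" "(R', p', S')" arbitrary: R p S rule: bfm_round.induct) auto

lemma bfm_round_marg_antimono:
  assumes "bfm_round v c B \<rho> us (R, p, S) (R', p', S')" and "round_invariant N us S"
    and "submodular_on N v" and "i \<in> {1, 2}" and "u \<in> N" and "u \<notin> S' i"
  shows "marg v u (S' i) \<le> marg v u (S i)"
proof (rule submodular_onD[OF assms(3) _ _ assms(5,6)])
  show "S i \<subseteq> S' i"
    using bfm_round_candidates[OF assms(1)] by blast
  show "S' i \<subseteq> N"
    using bfm_round_invariant[OF assms(1,2)] assms(4) by (auto simp: round_invariant_def)
qed

lemma bfm_round_rejected:
  assumes "bfm_round v c B \<rho> us (R, p, S) (R', p', S')" and "round_invariant N us S"
    and "\<forall>u\<in>set us. c u \<le> p u" and sub: "submodular_on N v" and "0 < B" and "0 < \<rho>"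
  shows "\<forall>w\<in>R - R'. w \<notin> S' 1 \<union> S' 2 \<and> (\<forall>i\<in>{1, 2}. marg v w (S' i) < c w * \<rho> / B)"
  using assms(1-3)
proof (induction us "(R, p, S)" "(R', p', S')" arbitrary: R p S rule: bfm_round.induct)
  case (reject j u S q p us R)
  have inv: "round_invariant N us S"
    using reject.prems(1) by (rule round_invariant_ConsD)
  have u: "u \<in> N" "u \<notin> S 1 \<union> S 2 \<union> set us"
    using reject.prems(1) by (auto simp: round_invariant_def)
  have "marg v u (S j) / (\<rho> / B) < c u"
    using reject.hyps(3,4) reject.prems(2) by auto
  then have "marg v u (S j) < c u * \<rho> / B"
    using \<open>0 < B\<close> \<open>0 < \<rho>\<close> by (simp add: field_simps)
  moreover have u_S': "u \<notin> S' 1 \<union> S' 2"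
    using bfm_round_candidates[OF reject.hyps(5)] u by blast
  moreover have "marg v u (S' i) \<le> marg v u (S j)" if "i \<in> {1, 2}" for i
  proof -
    have "marg v u (S' i) \<le> marg v u (S i)"
      using bfm_round_marg_antimono[OF reject.hyps(5) inv sub that u(1)] u_S' that by auto
    then show ?thesis
      using reject.hyps(2) that by fastforce
  qed
  moreover have "\<forall>w\<in>R - {u} - R'. w \<notin> S' 1 \<union> S' 2 \<and> (\<forall>i\<in>{1, 2}. marg v w (S' i) < c w * \<rho> / B)"
    using reject.hyps(6) inv reject.prems(2) u by auto
  ultimately show ?case
    by fastforce
next
  case (add j u S q p us R)
  have "round_invariant N us (S(j := S j \<union> {u}))"
    using add.prems(1) add.hyps(1) by (rule round_invariant_Cons_add)
  moreover have "\<forall>w\<in>set us. c w \<le> (p(u := q)) w"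
    using add.prems by (auto simp: round_invariant_def)
  ultimately show ?case
    by (rule add.hyps(7))
qed auto

lemma bfm_round_added_marg_other_le:
  assumes round: "bfm_round v c B \<rho> us (R, p, S(j := S j \<union> {u})) (R', p', S')"
    and "round_invariant N (u # us) S" and sub: "submodular_on N v" and j: "j \<in> {1, 2}"
    and best: "\<forall>i\<in>{1, 2}. marg v u (S i) \<le> marg v u (S j)"
  shows "marg v u (S' (3 - j)) \<le> marg v u (S j)"
proof -
  define S0 where "S0 = S(j := S j \<union> {u})"
  have inv: "round_invariant N us S0"
    unfolding S0_def using assms(2) j by (rule round_invariant_Cons_add)
  have "u \<in> N"
    using assms(2) by (simp add: round_invariant_def)
  have "u \<in> S' j"
    using bfm_round_candidates[OF round, of j] by simp
  then have "u \<notin> S' (3 - j)"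
    using bfm_round_invariant[OF round[folded S0_def] inv] j by (auto simp: round_invariant_def)
  then have "marg v u (S' (3 - j)) \<le> marg v u (S0 (3 - j))"
    using bfm_round_marg_antimono[OF round[folded S0_def] inv sub _ \<open>u \<in> N\<close>] j by auto
  also have "\<dots> = marg v u (S (3 - j))"
    using j by (auto simp: S0_def)
  also have "\<dots> \<le> marg v u (S j)"
    using best j by fastforce
  finally show ?thesis .
qed

text \<open>
  The gains of the sellers added to \<open>S k\<close> telescope to \<open>v (S' k) - v (S k)\<close>; they are
  nonnegative because those sellers accepted their prices, so the sellers outside \<open>X\<close> may be
  dropped.
\<close>
lemma bfm_round_sum_marg_other_le:
  assumes "bfm_round v c B \<rho> us (R, p, S) (R', p', S')" and "round_invariant N us S"
    and "\<forall>u\<in>set us. 0 \<le> c u" and sub: "submodular_on N v" and "0 < B" and "0 < \<rho>"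
    and "k \<in> {1, 2}"
  shows "(\<Sum>u\<in>X \<inter> (S' k - S k). marg v u (S' (3 - k))) \<le> v (S' k) - v (S k)"
  using assms(1-3)
proof (induction us "(R, p, S)" "(R', p', S')" arbitrary: R p S rule: bfm_round.induct)
  case (reject j u S q p us R)
  then show ?case
    by (auto dest: round_invariant_ConsD)
next
  case (add j u S q p us R)
  define S0 where "S0 = S(j := S j \<union> {u})"
  have round: "bfm_round v c B \<rho> us (R, p(u := q), S0) (R', p', S')"
    unfolding S0_def by (rule add.hyps(6))
  have inv: "round_invariant N us S0"
    unfolding S0_def using add.prems(1) add.hyps(1) by (rule round_invariant_Cons_add)
  have IH: "(\<Sum>w\<in>X \<inter> (S' k - S0 k). marg v w (S' (3 - k))) \<le> v (S' k) - v (S0 k)"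
    using add.hyps(7) inv add.prems(2) unfolding S0_def by auto
  show ?case
  proof (cases "k = j")
    case False
    then show ?thesis
      using IH by (simp add: S0_def)
  next
    case True
    have u: "u \<notin> S 1 \<union> S 2 \<union> set us" "0 \<le> c u"
      using add.prems by (auto simp: round_invariant_def)
    have S'k: "S0 k \<subseteq> S' k" "S' k \<subseteq> S0 k \<union> set us"
      using bfm_round_candidates[OF round] by auto
    have "u \<in> S' k"
      using S'k True by (auto simp: S0_def)
    have other: "marg v u (S' (3 - k)) \<le> marg v u (S k)"
      using bfm_round_added_marg_other_le[OF add.hyps(6) add.prems(1) sub add.hyps(1,2)] True
      by simp
    have "0 \<le> marg v u (S j) / (\<rho> / B)"
      using add.hyps(3,4) u(2) by linarith
    then have gain_nonneg: "0 \<le> marg v u (S k)"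
      using True \<open>0 < B\<close> \<open>0 < \<rho>\<close> by (simp add: zero_le_divide_iff zero_le_mult_iff)
    have "X \<inter> (S' k - S k) = X \<inter> (S' k - S0 k) \<union> X \<inter> {u}"
      using S'k True u(1) add.hyps(1) \<open>u \<in> S' k\<close> by (auto simp: S0_def)
    moreover have "finite (X \<inter> (S' k - S0 k))"
      using S'k by (auto intro: finite_subset)
    moreover have "u \<notin> X \<inter> (S' k - S0 k)"
      using True by (simp add: S0_def)
    moreover have "v (S0 k) = v (S k) + marg v u (S k)"
      using True by (simp add: S0_def marg_def)
    ultimately show ?thesis
      using IH other gain_nonneg by (cases "u \<in> X") auto
  qed
qed auto

lemma bfm_round_value_union_candidate_le:
  assumes round: "bfm_round v c B \<rho> us (R, p, \<lambda>i. {}) (R', p', S')"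
    and "distinct us" and "set us \<subseteq> N" and costs: "\<forall>u\<in>set us. 0 \<le> c u \<and> c u \<le> p u"
    and sub: "submodular_on N v" and nonneg: "\<And>Y. Y \<subseteq> N \<Longrightarrow> 0 \<le> v Y"
    and "0 < B" and "0 < \<rho>" and k: "k \<in> {1, 2}"
  shows "v (X \<inter> (S' 1 \<union> S' 2 \<union> (R - R')) \<union> S' k)
    \<le> v (S' 1) + v (S' 2) + \<rho> * sum c (X \<inter> (R - R')) / B"
proof -
  define D where "D = X \<inter> (S' 1 \<union> S' 2 \<union> (R - R'))"
  define Xr where "Xr = X \<inter> (R - R')"
  let ?o = "3 - k"
  have o: "?o \<in> {1, 2}" "3 - ?o = k" and sum_S': "v (S' k) + v (S' ?o) = v (S' 1) + v (S' 2)"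
    using k by auto
  have inv0: "round_invariant N us (\<lambda>i. {})"
    using assms(2,3) by (simp add: round_invariant_empty)
  have S'kN: "S' k \<subseteq> N" and disj: "S' 1 \<inter> S' 2 = {}"
    using bfm_round_invariant[OF round inv0] k by (auto simp: round_invariant_def)
  have S'us: "S' i \<subseteq> set us" for i
    using bfm_round_candidates[OF round] by simp
  have Rus: "R - R' \<subseteq> set us"
    using bfm_round_remaining[OF round] by simp
  have rej: "\<forall>w\<in>R - R'. w \<notin> S' 1 \<union> S' 2 \<and> (\<forall>i\<in>{1, 2}. marg v w (S' i) < c w * \<rho> / B)"
    using bfm_round_rejected[OF round inv0] costs sub \<open>0 < B\<close> \<open>0 < \<rho>\<close> by simp
  have D_minus: "D - S' k = X \<inter> S' ?o \<union> Xr" "X \<inter> S' ?o \<inter> Xr = {}"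
    using k rej disj unfolding D_def Xr_def by auto
  have "(\<Sum>u\<in>X \<inter> (S' ?o - {}). marg v u (S' (3 - ?o))) \<le> v (S' ?o) - v {}"
    by (rule bfm_round_sum_marg_other_le[OF round inv0 _ sub \<open>0 < B\<close> \<open>0 < \<rho>\<close> o(1)])
      (use costs in auto)
  then have other: "(\<Sum>u\<in>X \<inter> S' ?o. marg v u (S' k)) \<le> v (S' ?o)"
    using o(2) nonneg[of "{}"] by simp
  have "(\<Sum>u\<in>Xr. marg v u (S' k)) \<le> (\<Sum>u\<in>Xr. c u * \<rho> / B)"
    using rej k unfolding Xr_def by (intro sum_mono) (auto intro: less_imp_le)
  also have "\<dots> = \<rho> * sum c Xr / B"
    by (simp add: sum_distrib_left sum_divide_distrib mult.commute)
  finally have rejected_part: "(\<Sum>u\<in>Xr. marg v u (S' k)) \<le> \<rho> * sum c Xr / B" .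
  have "v (D \<union> S' k) \<le> v (S' k) + (\<Sum>u\<in>D - S' k. marg v u (S' k))"
    by (rule submodular_on_union_le_sum_marg[OF sub S'kN])
      (use S'us Rus \<open>set us \<subseteq> N\<close> in \<open>auto simp: D_def intro: finite_subset\<close>)
  also have "\<dots> = v (S' k) + (\<Sum>u\<in>X \<inter> S' ?o. marg v u (S' k)) + (\<Sum>u\<in>Xr. marg v u (S' k))"
    unfolding D_minus(1) using S'us Rus
    by (subst sum.union_disjoint[OF _ _ D_minus(2)]) (auto simp: Xr_def intro: finite_subset)
  finally show ?thesis
    using other rejected_part sum_S' unfolding D_def Xr_def by linarith
qed

lemma bfm_round_value_bound:
  assumes round: "bfm_round v c B \<rho> us (R, p, \<lambda>i. {}) (R', p', S')"
    and "distinct us" and "set us \<subseteq> N" and costs: "\<forall>u\<in>set us. 0 \<le> c u \<and> c u \<le> p u"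
    and sub: "submodular_on N v" and nonneg: "\<And>Y. Y \<subseteq> N \<Longrightarrow> 0 \<le> v Y"
    and "0 < B" and "0 < \<rho>"
  shows "v (X \<inter> (S' 1 \<union> S' 2 \<union> (R - R')))
    \<le> 2 * (v (S' 1) + v (S' 2)) + 2 * \<rho> * sum c (X \<inter> (R - R')) / B"
proof -
  define D where "D = X \<inter> (S' 1 \<union> S' 2 \<union> (R - R'))"
  have "round_invariant N us (\<lambda>i. {})"
    using assms(2,3) by (simp add: round_invariant_empty)
  then have S'N: "S' 1 \<subseteq> N" "S' 2 \<subseteq> N" and disj: "S' 1 \<inter> S' 2 = {}"
    using bfm_round_invariant[OF round] by (auto simp: round_invariant_def)
  have S'us: "S' i \<subseteq> set us" for i
    using bfm_round_candidates[OF round] by simp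
  have "D \<subseteq> N" "finite D"
    unfolding D_def using S'us bfm_round_remaining[OF round] \<open>set us \<subseteq> N\<close>
    by (auto intro: finite_subset)
  then have "v D \<le> v (D \<union> S' 1) + v (D \<union> S' 2)"
    using S'us S'N disj by (intro submodular_on_le_sum_union_disjoint[OF sub nonneg])
      (auto intro: finite_subset)
  then show ?thesis
    using bfm_round_value_union_candidate_le[OF assms, where X = X and k = 1]
      bfm_round_value_union_candidate_le[OF assms, where X = X and k = 2]
    unfolding D_def by simp
qed

section \<open>A complete run\<close>

locale bfm_vm_execution =
  fixes N :: "'a set" and ord :: "'a list" and v :: "'a set \<Rightarrow> real" and c :: "'a \<Rightarrow> real"
    and B \<alpha> :: real and M :: nat and \<rho> :: "nat \<Rightarrow> real" and S :: "nat \<Rightarrow> nat \<Rightarrow> 'a set"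
    and Rs :: "nat \<Rightarrow> 'a set" and ps :: "nat \<Rightarrow> 'a \<Rightarrow> real"
  assumes finite_N: "finite N" and distinct_ord: "distinct ord"
    and v_empty: "v {} = 0" and v_nonneg: "\<And>X. X \<subseteq> N \<Longrightarrow> 0 \<le> v X"
    and submodular: "submodular_on N v" and c_nonneg: "\<And>u. u \<in> N \<Longrightarrow> 0 \<le> c u"
    and B_pos: "0 < B" and alpha_gt_1: "1 < \<alpha>"
    and run: "bfm_vm_run N ord v c B \<alpha> M \<rho> S Rs ps"
begin

definition queue :: "nat \<Rightarrow> 'a list" where
  "queue t = filter (\<lambda>u. u \<in> Rs (t - 1) \<and> u \<notin> S 1 (t - 1) \<union> S 2 (t - 1)) ord"

definition rejected :: "nat \<Rightarrow> 'a set" where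
  "rejected t = Rs (t - 1) - Rs t"

lemma Rs_1: "Rs 1 = {u \<in> N. c u \<le> B}"
  using run unfolding bfm_vm_run_def by (elim conjE) assumption

lemma ps_1: "ps 1 = (\<lambda>u. B)"
  using run unfolding bfm_vm_run_def by (elim conjE) assumption

lemma first_round:
  obtains u0 where "u0 \<in> Rs 1" "\<forall>u\<in>Rs 1. v {u} \<le> v {u0}" "\<rho> 1 = v {u0}"
    "S 1 1 = {u0}" "S 2 1 = {}"
proof -
  have "\<exists>u0\<in>Rs 1. (\<forall>u\<in>Rs 1. v {u} \<le> v {u0}) \<and> \<rho> 1 = v {u0} \<and> S 1 1 = {u0} \<and> S 2 1 = {}"
    using run unfolding bfm_vm_run_def by (elim conjE) assumption
  then show ?thesis
    using that by blast
qed

lemma S_2_1: "S 2 1 = {}"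
  using first_round by metis

lemma two_le_M: "2 \<le> M"
  using run unfolding bfm_vm_run_def by (elim conjE) assumption

lemma rounds:
  "\<forall>t\<in>{2..M}. \<rho> t = \<alpha> * \<rho> (t - 1) \<and>
     bfm_round v c B (\<rho> t) (queue t) (Rs (t - 1), ps (t - 1), \<lambda>i. {}) (Rs t, ps t, \<lambda>i. S i t)"
  using run unfolding bfm_vm_run_def queue_def by (elim conjE) assumption

lemma rho_step: "t \<in> {2..M} \<Longrightarrow> \<rho> t = \<alpha> * \<rho> (t - 1)"
  using rounds by blast

lemma round:
  "t \<in> {2..M} \<Longrightarrow>
   bfm_round v c B (\<rho> t) (queue t) (Rs (t - 1), ps (t - 1), \<lambda>i. {}) (Rs t, ps t, \<lambda>i. S i t)"
  using rounds by blast

lemma last_round_covers: "Rs M \<subseteq> (\<Union>i\<in>{1, 2}. S i (M - 1) \<union> S i M)"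
proof -
  have "Rs M - (\<Union>i\<in>{1, 2}. S i (M - 1) \<union> S i M) = {}"
    using run unfolding bfm_vm_run_def by (elim conjE) assumption
  then show ?thesis
    by blast
qed

lemma Rs_subset: "t \<in> {2..M} \<Longrightarrow> Rs t \<subseteq> Rs (t - 1)"
  using bfm_round_remaining[OF round] by blast

lemma Rs_invariant:
  assumes "t \<in> {1..M}"
  shows "Rs t \<subseteq> N \<and> (\<forall>u\<in>Rs t. c u \<le> ps t u)"
proof -
  from assms have "1 \<le> t" "t \<le> M"
    by auto
  then show ?thesis
  proof (induction t rule: dec_induct)
    case base
    then show ?case
      using Rs_1 ps_1 by simp
  next
    case (step n)
    then have t: "Suc n \<in> {2..M}"
      by simp
    show ?case
      using step bfm_round_prices[OF round[OF t]] Rs_subset[OF t] by auto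
  qed
qed

lemma rho_eq_power:
  assumes "t \<in> {1..M}"
  shows "\<rho> t = \<alpha> ^ (t - 1) * \<rho> 1"
proof -
  from assms have "1 \<le> t" "t \<le> M"
    by auto
  then show ?thesis
  proof (induction t rule: dec_induct)
    case (step n)
    then show ?case
      using rho_step[of "Suc n"] by (cases n) auto
  qed simp
qed

lemma rho_1_nonneg: "0 \<le> \<rho> 1"
proof -
  obtain u0 where "u0 \<in> Rs 1" "\<rho> 1 = v {u0}"
    by (rule first_round)
  then show ?thesis
    using v_nonneg Rs_1 by auto
qed

lemma rho_le_rho_M: "t \<in> {1..M} \<Longrightarrow> \<rho> t \<le> \<rho> M"
  using rho_eq_power[of t] rho_eq_power[of M] two_le_M rho_1_nonneg alpha_gt_1
  by (auto intro!: mult_right_mono power_increasing)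

lemma rho_pos: "0 < \<rho> 1 \<Longrightarrow> t \<in> {1..M} \<Longrightarrow> 0 < \<rho> t"
  using rho_eq_power[of t] alpha_gt_1 by simp

lemma queue_subset: "set (queue t) \<subseteq> Rs (t - 1)"
  by (auto simp: queue_def)

lemma distinct_queue: "distinct (queue t)"
  by (simp add: queue_def distinct_ord)

lemma S_subset_N:
  assumes "i \<in> {1, 2}" and "t \<in> {1..M}"
  shows "S i t \<subseteq> N"
proof (cases "t = 1")
  case True
  obtain u0 where "u0 \<in> Rs 1" "S 1 1 = {u0}" "S 2 1 = {}"
    by (rule first_round)
  then show ?thesis
    using True assms(1) Rs_1 by auto
next
  case False
  then have t: "t \<in> {2..M}"
    using assms(2) by simp
  then have "set (queue t) \<subseteq> N"
    using queue_subset Rs_invariant[of "t - 1"] by fastforce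
  then have "round_invariant N (queue t) (\<lambda>i. {})"
    by (simp add: round_invariant_empty distinct_queue)
  then show ?thesis
    using bfm_round_invariant[OF round[OF t]] assms(1) by (auto simp: round_invariant_def)
qed

lemma v_S_nonneg: "i \<in> {1, 2} \<Longrightarrow> t \<in> {1..M} \<Longrightarrow> 0 \<le> v (S i t)"
  using S_subset_N v_nonneg by blast

lemma feasible_subset_Rs_1:
  assumes "X \<subseteq> N" and "sum c X \<le> B"
  shows "X \<subseteq> Rs 1"
proof
  fix u
  assume "u \<in> X"
  then have "c u \<le> sum c X"
    using assms(1) c_nonneg finite_N by (intro member_le_sum) (auto intro: finite_subset)
  then show "u \<in> Rs 1"
    using \<open>u \<in> X\<close> assms Rs_1 by auto
qed

lemma Rs_1_covered:
  "Rs 1 \<subseteq> (\<Union>t\<in>{1..M}. S 1 t \<union> S 2 t) \<union> (\<Union>t\<in>{2..M}. rejected t)"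
proof
  fix u
  assume u: "u \<in> Rs 1"
  show "u \<in> (\<Union>t\<in>{1..M}. S 1 t \<union> S 2 t) \<union> (\<Union>t\<in>{2..M}. rejected t)"
  proof (cases "u \<in> Rs M")
    case True
    then show ?thesis
      using last_round_covers two_le_M by fastforce
  next
    case False
    obtain k where "k < M - 1" "u \<in> Rs (Suc k)" "u \<notin> Rs (Suc (Suc k))"
      using ex_least_nat_less[of "\<lambda>i. u \<notin> Rs (Suc i)" "M - 1"] u False two_le_M by auto
    then have "u \<in> rejected (Suc (Suc k))" "Suc (Suc k) \<in> {2..M}"
      by (auto simp: rejected_def)
    then show ?thesis
      by blast
  qed
qed

lemma sum_cost_rejected_le:
  assumes "X \<subseteq> N"
  shows "(\<Sum>t\<in>{2..M}. sum c (X \<inter> rejected t)) \<le> sum c X"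
proof -
  define f where "f t = - sum c (X \<inter> Rs t)" for t
  have finX: "finite X"
    using assms finite_N by (rule finite_subset)
  have "sum c (X \<inter> rejected t) = f t - f (t - 1)" if "t \<in> {2..M}" for t
  proof -
    have "X \<inter> rejected t = X \<inter> Rs (t - 1) - X \<inter> Rs t" "X \<inter> Rs t \<subseteq> X \<inter> Rs (t - 1)"
      using Rs_subset[OF that] by (auto simp: rejected_def)
    then show ?thesis
      using finX by (simp add: f_def sum_diff)
  qed
  then have "(\<Sum>t\<in>{2..M}. sum c (X \<inter> rejected t)) = (\<Sum>t\<in>{Suc 1..M}. f t - f (t - 1))"
    by (simp add: numeral_2_eq_2)
  also have "\<dots> = f M - f 1"
    using two_le_M by (intro sum_telescope'') simp
  also have "\<dots> \<le> sum c X"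
  proof -
    have "0 \<le> sum c (X \<inter> Rs M)" "sum c (X \<inter> Rs 1) \<le> sum c X"
      using assms c_nonneg finX by (auto intro: sum_nonneg sum_mono2)
    then show ?thesis
      by (simp add: f_def)
  qed
  finally show ?thesis .
qed

lemma round_value_bound:
  assumes t: "t \<in> {2..M}" and "0 < \<rho> 1"
  shows "v (X \<inter> (S 1 t \<union> S 2 t \<union> rejected t))
    \<le> 2 * (v (S 1 t) + v (S 2 t)) + 2 * \<rho> M * sum c (X \<inter> rejected t) / B"
proof -
  have "t - 1 \<in> {1..M}"
    using t by auto
  then have Rs_prev: "Rs (t - 1) \<subseteq> N" "\<forall>u\<in>Rs (t - 1). c u \<le> ps (t - 1) u"
    using Rs_invariant by auto
  have "v (X \<inter> (S 1 t \<union> S 2 t \<union> rejected t))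
    \<le> 2 * (v (S 1 t) + v (S 2 t)) + 2 * \<rho> t * sum c (X \<inter> rejected t) / B"
    unfolding rejected_def
    by (rule bfm_round_value_bound[OF round[OF t] distinct_queue _ _ submodular v_nonneg B_pos])
      (use queue_subset Rs_prev c_nonneg rho_pos[OF \<open>0 < \<rho> 1\<close>] t in fastforce)+
  also have "\<dots> \<le> 2 * (v (S 1 t) + v (S 2 t)) + 2 * \<rho> M * sum c (X \<inter> rejected t) / B"
  proof -
    have "0 \<le> sum c (X \<inter> rejected t)"
      using Rs_prev c_nonneg by (intro sum_nonneg) (auto simp: rejected_def)
    then show ?thesis
      using rho_le_rho_M[of t] t B_pos by (auto intro!: divide_right_mono mult_right_mono)
  qed
  finally show ?thesis .
qed

lemma value_nonpos_if_rho_1_nonpos: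
  assumes "\<rho> 1 \<le> 0" and "X \<subseteq> Rs 1"
  shows "v X \<le> 0"
proof -
  obtain u0 where u0: "\<forall>u\<in>Rs 1. v {u} \<le> v {u0}" "\<rho> 1 = v {u0}"
    by (rule first_round)
  have XN: "X \<subseteq> N"
    using assms(2) Rs_1 by auto
  have "v X = v (\<Union>u\<in>X. {u})"
    by simp
  also have "\<dots> \<le> (\<Sum>u\<in>X. v {u})"
    using XN finite_N
    by (intro submodular_on_subadditive_UN[OF submodular v_nonneg v_empty]) (auto intro: finite_subset)
  also have "\<dots> \<le> 0"
    using u0 assms by (intro sum_nonpos) force
  finally show ?thesis .
qed

lemma feasible_value_le_sum_rounds:
  assumes "X \<subseteq> N" and "sum c X \<le> B"
  shows "v X \<le> v (S 1 1) + (\<Sum>t\<in>{2..M}. v (X \<inter> (S 1 t \<union> S 2 t \<union> rejected t)))"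
proof -
  define D where "D t = X \<inter> (S 1 t \<union> S 2 t \<union> rejected t)" for t
  obtain u0 where u0: "u0 \<in> Rs 1" "S 1 1 = {u0}" "S 2 1 = {}"
    by (rule first_round)
  have "{1..M} = insert 1 {2..M}"
    using two_le_M by auto
  then have "X \<subseteq> S 1 1 \<union> (\<Union>t\<in>{2..M}. S 1 t \<union> S 2 t \<union> rejected t)"
    using Rs_1_covered feasible_subset_Rs_1[OF assms] u0(3) by auto
  then have X_eq: "X = X \<inter> S 1 1 \<union> (\<Union>t\<in>{2..M}. D t)"
    unfolding D_def by auto
  have finX: "finite X"
    using assms(1) finite_N by (rule finite_subset)
  have D: "D t \<subseteq> N" "finite (D t)" for t
    using assms(1) finX unfolding D_def by auto
  have "v X \<le> v (X \<inter> S 1 1) + v (\<Union>t\<in>{2..M}. D t)"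
    using submodular_on_subadditive[OF submodular v_nonneg, of "X \<inter> S 1 1" "\<Union>t\<in>{2..M}. D t"]
      X_eq assms(1) finX D by auto
  also have "v (X \<inter> S 1 1) \<le> v (S 1 1)"
    using u0 v_empty v_nonneg[of "S 1 1"] S_subset_N[of 1 1] two_le_M by (cases "u0 \<in> X") auto
  also have "v (\<Union>t\<in>{2..M}. D t) \<le> (\<Sum>t\<in>{2..M}. v (D t))"
    using submodular_on_subadditive_UN[OF submodular v_nonneg v_empty, of "{2..M}" D] D by simp
  finally show ?thesis
    unfolding D_def by simp
qed

theorem feasible_value_le:
  assumes "X \<subseteq> N" and "sum c X \<le> B"
  shows "v X \<le> 2 * \<rho> M + 2 * (\<Sum>i\<in>{1, 2::nat}. \<Sum>t\<in>{1..M}. v (S i t))"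
proof (cases "0 < \<rho> 1")
  case False
  \<comment> \<open>Then all thresholds vanish and the offered prices divide by zero.\<close>
  then have "v X \<le> 0"
    using value_nonpos_if_rho_1_nonpos feasible_subset_Rs_1[OF assms] by simp
  moreover have "0 \<le> \<rho> M"
    using rho_le_rho_M[of 1] rho_1_nonneg two_le_M by simp
  moreover have "0 \<le> (\<Sum>i\<in>{1, 2::nat}. \<Sum>t\<in>{1..M}. v (S i t))"
    by (intro sum_nonneg v_S_nonneg)
  ultimately show ?thesis
    by linarith
next
  case True
  let ?rest = "\<Sum>t\<in>{2..M}. v (S 1 t) + v (S 2 t)"
  have "v X \<le> v (S 1 1) + (\<Sum>t\<in>{2..M}. v (X \<inter> (S 1 t \<union> S 2 t \<union> rejected t)))"
    by (rule feasible_value_le_sum_rounds[OF assms])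
  also have "\<dots> \<le> v (S 1 1)
      + (\<Sum>t\<in>{2..M}. 2 * (v (S 1 t) + v (S 2 t)) + 2 * \<rho> M * sum c (X \<inter> rejected t) / B)"
    using round_value_bound[OF _ True] by (intro add_left_mono sum_mono) auto
  also have "\<dots> = v (S 1 1) + 2 * ?rest
      + 2 * \<rho> M / B * (\<Sum>t\<in>{2..M}. sum c (X \<inter> rejected t))"
    by (simp add: sum.distrib sum_distrib_left sum_divide_distrib)
  also have "\<dots> \<le> v (S 1 1) + 2 * ?rest + 2 * \<rho> M / B * B"
    using sum_cost_rejected_le[OF assms(1)] assms(2) rho_pos[OF True, of M] two_le_M B_pos
    by (intro add_left_mono mult_left_mono) auto
  also have "\<dots> \<le> 2 * \<rho> M + 2 * (v (S 1 1) + ?rest)"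
    using B_pos v_S_nonneg[of 1 1] two_le_M by simp
  also have "v (S 1 1) + ?rest = (\<Sum>i\<in>{1, 2::nat}. \<Sum>t\<in>{1..M}. v (S i t))"
    using two_le_M S_2_1 v_empty
    by (simp add: sum.atLeast_Suc_atMost numeral_2_eq_2 sum.distrib)
  finally show ?thesis .
qed

end

theorem lemma5p1:
  fixes N :: "'a set" and ord :: "'a list"
    and v :: "'a set \<Rightarrow> real" and c :: "'a \<Rightarrow> real"
    and B \<alpha> :: real and M :: nat
    and \<rho> :: "nat \<Rightarrow> real" and S :: "nat \<Rightarrow> nat \<Rightarrow> 'a set"
    and Rs :: "nat \<Rightarrow> 'a set" and ps :: "nat \<Rightarrow> 'a \<Rightarrow> real"
    and Opt :: "'a set"
  assumes "finite N"
    and "distinct ord" and "set ord = N"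
    and "v {} = 0"
    and "\<forall>X \<subseteq> N. v X \<ge> 0"
    and "submodular_on N v"
    and "\<forall>u \<in> N. c u \<ge> 0"
    and "B > 0" and "\<alpha> > 1"
    and "bfm_vm_run N ord v c B \<alpha> M \<rho> S Rs ps"
    and "Opt \<subseteq> N" and "sum c Opt \<le> B"
    and "\<forall>X \<subseteq> N. sum c X \<le> B \<longrightarrow> v X \<le> v Opt"
  shows "v Opt \<le> 2 * \<rho> M + 2 * (\<Sum>i\<in>{1,2::nat}. \<Sum>t\<in>{1..M}. v (S i t))"
proof -
  interpret bfm_vm_execution N ord v c B \<alpha> M \<rho> S Rs ps
    using assms(1,2,4-10) by unfold_locales auto
  show ?thesis
    using feasible_value_le assms(11,12) by blast
qed

end
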